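(* Let $\xi$ be a model with $\xi(1)=1$ which is not of the form $\xi(t)=at^2$. Let $m,c>0$ solve $$\xi(1)=\frac1m\Big(\frac1m\log\Big(\frac{c+m}{c}\Big)-\frac1{c+m}\Big),\qquad\frac1{\xi'(1)}=c(c+m),$$ and let $\eta(t)=\xi(1)-\int_t^1\int_0^s\phi(\tau)^{-2}d\tau\,ds$ with $\phi(t)=m(1-t)+c$. Then $\eta''(1)\ge\xi''(1)$ if and only if $\xi$ is pure-like or critical.
   Context: A model is $\xi(t)=\sum_{p\ge2}\beta_p^2t^p$, real $\beta_p$ not all zero, with $\xi(1+\epsilon)<\infty$ for some $\epsilon>0$. With $\nu'=\xi'(1)$, $\nu''=\xi''(1)$, define $ABA=\log(\nu''/\nu')-\frac{(\nu''-\nu')(\nu''-\nu'+\nu'^2)}{\nu''\nu'^2}$; $\xi$ is pure-like if $ABA>0$ and critical if $ABA=0$. *)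

theory Defs
  imports "HOL-Analysis.Analysis"
begin

definition xi :: "(nat \<Rightarrow> real) \<Rightarrow> real \<Rightarrow> real" where
  "xi \<beta> t = (\<Sum>p. (if 2 \<le> p then (\<beta> p)\<^sup>2 * t ^ p else 0))"

definition is_model :: "(nat \<Rightarrow> real) \<Rightarrow> bool" where
  "is_model \<beta> \<longleftrightarrow> (\<exists>p\<ge>2. \<beta> p \<noteq> 0) \<and>
     (\<exists>\<epsilon>>0. summable (\<lambda>p. if 2 \<le> p then (\<beta> p)\<^sup>2 * (1 + \<epsilon>) ^ p else 0))"

definition nu1 :: "(nat \<Rightarrow> real) \<Rightarrow> real" where
  "nu1 \<beta> = deriv (xi \<beta>) 1"

definition nu2 :: "(nat \<Rightarrow> real) \<Rightarrow> real" where
  "nu2 \<beta> = deriv (deriv (xi \<beta>)) 1"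

definition ABA :: "(nat \<Rightarrow> real) \<Rightarrow> real" where
  "ABA \<beta> = ln (nu2 \<beta> / nu1 \<beta>)
     - ((nu2 \<beta> - nu1 \<beta>) * (nu2 \<beta> - nu1 \<beta> + (nu1 \<beta>)\<^sup>2)) / (nu2 \<beta> * (nu1 \<beta>)\<^sup>2)"

definition pure_like :: "(nat \<Rightarrow> real) \<Rightarrow> bool" where
  "pure_like \<beta> \<longleftrightarrow> ABA \<beta> > 0"

definition critical :: "(nat \<Rightarrow> real) \<Rightarrow> bool" where
  "critical \<beta> \<longleftrightarrow> ABA \<beta> = 0"

definition phi :: "real \<Rightarrow> real \<Rightarrow> real \<Rightarrow> real" where
  "phi m c t = m * (1 - t) + c"

definition eta :: "(nat \<Rightarrow> real) \<Rightarrow> real \<Rightarrow> real \<Rightarrow> real \<Rightarrow> real" where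
  "eta \<beta> m c t = xi \<beta> 1 -
     (LBINT s = ereal t..ereal 1. (LBINT \<tau> = ereal 0..ereal s. 1 / (phi m c \<tau>)\<^sup>2))"

end

theory Submission
  imports Defs
begin

text \<open>
  Write \<open>k = 1/\<nu>'\<close> and \<open>r = \<nu>''/\<nu>'\<close>. Then \<open>ABA = F\<^sub>k(r)\<close> with
  \<open>F\<^sub>k(r) = ln r - (r-1)/r - k(r-1)\<^sup>2/r\<close>, whose derivative has the sign of \<open>(r-1)(1/k-1-r)\<close>.
  Since \<open>F\<^sub>k(1) = 0\<close>, \<open>F\<^sub>k\<close> is positive exactly between 1 and its second zero \<open>u\<close>. The two
  equations for \<open>m, c\<close> say that \<open>k = c(c+m)\<close> and \<open>u = (c+m)/c\<close>, and \<open>\<eta>''(1) = \<phi>(1)\<^sup>-\<^sup>2 = c\<^sup>-\<^sup>2\<close>,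
  so \<open>\<eta>''(1) \<ge> \<xi>''(1)\<close> says precisely \<open>r \<le> u\<close>, i.e. \<open>ABA \<ge> 0\<close>.
\<close>

definition aba_fun :: "real \<Rightarrow> real \<Rightarrow> real" where
  "aba_fun k r = ln r - (r - 1) / r - k * (r - 1)\<^sup>2 / r"

lemma ABA_eq_aba_fun:
  assumes "nu1 \<beta> \<noteq> 0" "nu2 \<beta> \<noteq> 0"
  shows "ABA \<beta> = aba_fun (1 / nu1 \<beta>) (nu2 \<beta> / nu1 \<beta>)"
  using assms unfolding ABA_def aba_fun_def by (simp add: field_simps power2_eq_square)

lemma aba_fun_at_1 [simp]: "aba_fun k 1 = 0"
  by (simp add: aba_fun_def)

lemma has_real_derivative_aba_fun:
  assumes "k > 0" "x > 0"
  shows "(aba_fun k has_real_derivative k * (x - 1) * (1 / k - 1 - x) / x\<^sup>2) (at x)"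
proof -
  have "((\<lambda>r. ln r - (r - 1) / r - k * (r - 1)\<^sup>2 / r) has_real_derivative
      1 / x - (x - (x - 1)) / x\<^sup>2 - (k * (2 * (x - 1)) * x - k * (x - 1)\<^sup>2) / x\<^sup>2) (at x)"
    using assms by (auto intro!: derivative_eq_intros simp: power2_eq_square)
  moreover have "1 / x - (x - (x - 1)) / x\<^sup>2 - (k * (2 * (x - 1)) * x - k * (x - 1)\<^sup>2) / x\<^sup>2
      = k * (x - 1) * (1 / k - 1 - x) / x\<^sup>2"
    using assms by (simp add: field_simps power2_eq_square)
  ultimately show ?thesis
    unfolding aba_fun_def[abs_def] by simp
qed

lemma continuous_on_aba_fun: "k > 0 \<Longrightarrow> 0 < a \<Longrightarrow> continuous_on {a..b} (aba_fun k)"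
  by (intro continuous_at_imp_continuous_on ballI DERIV_isCont[OF has_real_derivative_aba_fun])
    auto

lemma aba_fun_strict_decreasing:
  assumes "k > 0" "0 < a" "a < b" "\<And>x. a < x \<Longrightarrow> x < b \<Longrightarrow> (x - 1) * (1 / k - 1 - x) < 0"
  shows "aba_fun k b < aba_fun k a"
proof (rule DERIV_neg_imp_decreasing_open[OF \<open>a < b\<close> _ continuous_on_aba_fun])
  fix x assume "a < x" "x < b"
  with assms have "k * ((x - 1) * (1 / k - 1 - x)) / x\<^sup>2 < 0"
    by (simp add: divide_neg_pos mult_pos_neg)
  with assms \<open>a < x\<close> show "\<exists>y. DERIV (aba_fun k) x :> y \<and> y < 0"
    by (metis has_real_derivative_aba_fun less_trans mult.assoc)
qed (use assms in auto)

lemma aba_fun_strict_increasing: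
  assumes "k > 0" "0 < a" "a < b" "\<And>x. a < x \<Longrightarrow> x < b \<Longrightarrow> (x - 1) * (1 / k - 1 - x) > 0"
  shows "aba_fun k a < aba_fun k b"
proof (rule DERIV_pos_imp_increasing_open[OF \<open>a < b\<close> _ continuous_on_aba_fun])
  fix x assume "a < x" "x < b"
  with assms have "k * ((x - 1) * (1 / k - 1 - x)) / x\<^sup>2 > 0"
    by simp
  with assms \<open>a < x\<close> show "\<exists>y. DERIV (aba_fun k) x :> y \<and> y > 0"
    by (metis has_real_derivative_aba_fun less_trans mult.assoc)
qed (use assms in auto)

lemma aba_fun_nonneg_iff:
  assumes "k > 0" "u > 1" "aba_fun k u = 0" "r > 0"
  shows "aba_fun k r \<ge> 0 \<longleftrightarrow> r \<le> u"
proof -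
  define r\<^sub>0 where "r\<^sub>0 = 1 / k - 1"
  note decr = aba_fun_strict_decreasing[OF \<open>k > 0\<close>, folded r\<^sub>0_def]
  note incr = aba_fun_strict_increasing[OF \<open>k > 0\<close>, folded r\<^sub>0_def]
  \<comment> \<open>the zero \<open>u > 1\<close> forces the critical point \<open>r\<^sub>0\<close> of \<open>aba_fun k\<close> to lie strictly between 1 and \<open>u\<close>\<close>
  have "r\<^sub>0 < u"
  proof (rule ccontr)
    assume "\<not> r\<^sub>0 < u"
    then have "aba_fun k 1 < aba_fun k u"
      using \<open>u > 1\<close> by (intro incr) (auto intro!: mult_pos_pos)
    with assms show False by simp
  qed
  have "r\<^sub>0 > 1"
  proof (rule ccontr)
    assume "\<not> r\<^sub>0 > 1"
    then have "aba_fun k u < aba_fun k 1"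
      using \<open>u > 1\<close> by (intro decr) (auto intro!: mult_pos_neg)
    with assms show False by simp
  qed
  consider "r < 1" | "r = 1" | "1 < r" "r \<le> r\<^sub>0" | "r\<^sub>0 < r" "r < u" | "r = u" | "u < r"
    by linarith
  then show ?thesis
  proof cases
    case 1
    then have "aba_fun k 1 < aba_fun k r"
      using \<open>r > 0\<close> \<open>r\<^sub>0 > 1\<close> by (intro decr) (auto intro!: mult_neg_pos)
    with 1 \<open>u > 1\<close> show ?thesis by simp
  next
    case 3
    then have "aba_fun k 1 < aba_fun k r"
      by (intro incr) (auto intro!: mult_pos_pos)
    with 3 \<open>r\<^sub>0 < u\<close> show ?thesis by simp
  next
    case 4
    then have "aba_fun k u < aba_fun k r"
      using \<open>r\<^sub>0 > 1\<close> by (intro decr) (auto intro!: mult_pos_neg)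
    with 4 assms show ?thesis by simp
  next
    case 6
    then have "aba_fun k r < aba_fun k u"
      using \<open>r\<^sub>0 > 1\<close> \<open>r\<^sub>0 < u\<close> by (intro decr) (auto intro!: mult_pos_neg)
    with 6 assms show ?thesis by simp
  qed (use assms in auto)
qed

lemma aba_fun_root_from_parameters:
  assumes "m > 0" "c > 0" "1 = (1 / m) * ((1 / m) * ln ((c + m) / c) - 1 / (c + m))"
  shows "aba_fun (c * (c + m)) ((c + m) / c) = 0"
proof -
  have "m\<^sup>2 = ln ((c + m) / c) - m / (c + m)"
    using assms by (simp add: field_simps power2_eq_square)
  moreover have "((c + m) / c - 1) / ((c + m) / c) = m / (c + m)"
    using assms by (simp add: field_simps)
  moreover have "c * (c + m) * ((c + m) / c - 1)\<^sup>2 / ((c + m) / c) = m\<^sup>2"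
  proof -
    have "c + m > 0" "(c + m) / c - 1 = m / c"
      using \<open>m > 0\<close> \<open>c > 0\<close> by (simp_all add: field_simps)
    then show ?thesis
      using \<open>c > 0\<close> by (simp add: power2_eq_square)
  qed
  ultimately show ?thesis
    unfolding aba_fun_def by linarith
qed

lemma powser_deriv2_pos:
  fixes a :: "nat \<Rightarrow> real"
  assumes "summable (\<lambda>p. a p * K ^ p)" "K > 1"
    and "\<And>p. a p \<ge> 0" "a q > 0" "q \<ge> 2"
  shows "deriv (deriv (\<lambda>t. \<Sum>p. a p * t ^ p)) 1 > 0"
proof -
  have deriv_eq: "deriv (\<lambda>t. \<Sum>p. a p * t ^ p) x = (\<Sum>p. diffs a p * x ^ p)"
    if "x \<in> {-K<..<K}" for x
    using that \<open>K > 1\<close> by (intro DERIV_imp_deriv termdiffs_strong[OF assms(1)]) auto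
  have "summable (\<lambda>p. diffs a p * ((1 + K) / 2) ^ p)"
    using assms by (intro termdiff_converges[of _ K] powser_inside[OF assms(1)]) auto
  then have "DERIV (\<lambda>x. \<Sum>p. diffs a p * x ^ p) 1 :> (\<Sum>p. diffs (diffs a) p * 1 ^ p)"
    using \<open>K > 1\<close> by (intro termdiffs_strong) auto
  then have "DERIV (deriv (\<lambda>t. \<Sum>p. a p * t ^ p)) 1 :> (\<Sum>p. diffs (diffs a) p * 1 ^ p)"
    by (rule has_field_derivative_transform_within_open[of _ _ _ "{-K<..<K}"])
      (use \<open>K > 1\<close> deriv_eq in auto)
  then have deriv2_eq: "deriv (deriv (\<lambda>t. \<Sum>p. a p * t ^ p)) 1 = (\<Sum>p. diffs (diffs a) p)"
    by (simp add: DERIV_imp_deriv)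
  have "summable (\<lambda>p. diffs (diffs a) p * 1 ^ p)"
    using \<open>K > 1\<close> by (intro termdiff_converges[of _ K] termdiff_converges powser_inside[OF assms(1)])
      auto
  moreover have "Suc (Suc (q - 2)) = q"
    using \<open>q \<ge> 2\<close> by simp
  ultimately have "0 < (\<Sum>p. diffs (diffs a) p)"
    using assms by (intro suminf_pos2[of _ "q - 2"]) (auto simp: diffs_def)
  with deriv2_eq show ?thesis by simp
qed

lemma nu2_pos:
  assumes "is_model \<beta>"
  shows "nu2 \<beta> > 0"
proof -
  define a where "a p = (if 2 \<le> p then (\<beta> p)\<^sup>2 else 0)" for p
  obtain \<epsilon> :: real where "\<epsilon> > 0"
    and summable: "summable (\<lambda>p. if 2 \<le> p then (\<beta> p)\<^sup>2 * (1 + \<epsilon>) ^ p else 0)"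
    using assms unfolding is_model_def by blast
  from summable have "summable (\<lambda>p. a p * (1 + \<epsilon>) ^ p)"
    by (rule summable_cong[THEN iffD1, rotated]) (simp add: a_def)
  moreover obtain q where "q \<ge> 2" "\<beta> q \<noteq> 0"
    using assms unfolding is_model_def by blast
  ultimately have "deriv (deriv (\<lambda>t. \<Sum>p. a p * t ^ p)) 1 > 0"
    using \<open>\<epsilon> > 0\<close> by (intro powser_deriv2_pos[of _ "1 + \<epsilon>" q]) (auto simp: a_def)
  moreover have "xi \<beta> = (\<lambda>t. \<Sum>p. a p * t ^ p)"
    unfolding xi_def a_def by (intro ext suminf_cong) auto
  ultimately show ?thesis
    unfolding nu2_def by simp
qed

lemma phi_pos: "m > 0 \<Longrightarrow> t < 1 + c / m \<Longrightarrow> phi m c t > 0"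
  unfolding phi_def by (simp add: field_simps)

lemma has_real_derivative_phi: "(phi m c has_real_derivative - m) (at t)"
  unfolding phi_def[abs_def] by (auto intro!: derivative_eq_intros)

lemma has_real_derivative_inverse_phi:
  assumes "m > 0" "t < 1 + c / m"
  shows "((\<lambda>s. 1 / (m * phi m c s)) has_real_derivative 1 / (phi m c t)\<^sup>2) (at t)"
proof -
  have "phi m c t > 0"
    using phi_pos[OF assms] .
  then have "((\<lambda>s. 1 / (m * phi m c s)) has_real_derivative - (m * - m) / (m * phi m c t)\<^sup>2) (at t)"
    using \<open>m > 0\<close> by (auto intro!: derivative_eq_intros has_real_derivative_phi simp: power2_eq_square)
  moreover have "- (m * - m) / (m * phi m c t)\<^sup>2 = 1 / (phi m c t)\<^sup>2"
    using \<open>m > 0\<close> \<open>phi m c t > 0\<close> by (simp add: field_simps power2_eq_square)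
  ultimately show ?thesis
    by simp
qed

lemma has_real_derivative_ln_phi:
  assumes "m > 0" "t < 1 + c / m"
  shows "((\<lambda>s. - ln (phi m c s) / m\<^sup>2) has_real_derivative 1 / (m * phi m c t)) (at t)"
proof -
  have "phi m c t > 0"
    using phi_pos[OF assms] .
  then have "((\<lambda>s. ln (phi m c s)) has_real_derivative - m / phi m c t) (at t)"
    using DERIV_chain2[OF DERIV_ln_divide has_real_derivative_phi] by simp
  then have "((\<lambda>s. - ln (phi m c s) / m\<^sup>2) has_real_derivative - (- m / phi m c t) / m\<^sup>2) (at t)"
    by (intro DERIV_cdivide DERIV_minus)
  moreover have "- (- m / phi m c t) / m\<^sup>2 = 1 / (m * phi m c t)"
    using \<open>m > 0\<close> \<open>phi m c t > 0\<close> by (simp add: field_simps power2_eq_square)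
  ultimately show ?thesis
    by simp
qed

lemma interval_integral_inverse_phi_sq:
  assumes "m > 0" "c > 0" "s < 1 + c / m"
  shows "(LBINT \<tau>=ereal 0..ereal s. 1 / (phi m c \<tau>)\<^sup>2) = 1 / (m * phi m c s) - 1 / (m * (m + c))"
proof -
  have "0 < 1 + c / m"
    using assms by (simp add: add_pos_pos)
  moreover have "isCont (\<lambda>\<tau>. 1 / (phi m c \<tau>)\<^sup>2) x" if "x < 1 + c / m" for x
    using phi_pos[OF \<open>m > 0\<close> that] unfolding phi_def by (intro continuous_intros) auto
  ultimately have "(LBINT \<tau>=ereal 0..ereal s. 1 / (phi m c \<tau>)\<^sup>2)
      = 1 / (m * phi m c s) - 1 / (m * phi m c 0)"
    using \<open>m > 0\<close> \<open>s < 1 + c / m\<close>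
    by (intro interval_integral_FTC_finite continuous_at_imp_continuous_on ballI
        has_vector_derivative_at_within[OF
          has_real_derivative_iff_has_vector_derivative[THEN iffD1, OF has_real_derivative_inverse_phi]])
      auto
  then show ?thesis
    by (simp add: phi_def add.commute)
qed

lemma has_real_derivative_eta:
  assumes "m > 0" "c > 0" "t < 1 + c / m"
  shows "(eta \<beta> m c has_real_derivative 1 / (m * phi m c t) - 1 / (m * (m + c))) (at t)"
proof -
  define G where "G s = - ln (phi m c s) / m\<^sup>2 - s / (m * (m + c))" for s
  have G_deriv: "(G has_real_derivative 1 / (m * phi m c x) - 1 / (m * (m + c))) (at x)"
    if "x < 1 + c / m" for x
    unfolding G_def[abs_def]
    by (rule DERIV_diff[OF has_real_derivative_ln_phi[OF \<open>m > 0\<close> that] DERIV_cdivide[OF DERIV_ident]])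
  have eta_eq: "xi \<beta> 1 - (G 1 - G x) = eta \<beta> m c x" if "x < 1 + c / m" for x
  proof -
    have "1 < 1 + c / m"
      using assms by simp
    with that have dom: "{min x 1..max x 1} \<subseteq> {..<1 + c / m}"
      by auto
    have "(LBINT s=ereal x..ereal 1. (LBINT \<tau>=ereal 0..ereal s. 1 / (phi m c \<tau>)\<^sup>2)) = G 1 - G x"
    proof (rule interval_integral_FTC_finite)
      have "continuous_on {min x 1..max x 1} (\<lambda>s. 1 / (m * phi m c s) - 1 / (m * (m + c)))"
        using dom \<open>m > 0\<close>
        by (intro continuous_at_imp_continuous_on ballI isCont_diff continuous_const
            DERIV_isCont[OF has_real_derivative_inverse_phi]) auto
      then show "continuous_on {min x 1..max x 1}
          (\<lambda>s. LBINT \<tau>=ereal 0..ereal s. 1 / (phi m c \<tau>)\<^sup>2)"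
      proof (rule continuous_on_cong[THEN iffD1, rotated 2])
        fix s assume "s \<in> {min x 1..max x 1}"
        with dom have "s < 1 + c / m"
          by auto
        then show "1 / (m * phi m c s) - 1 / (m * (m + c))
            = (LBINT \<tau>=ereal 0..ereal s. 1 / (phi m c \<tau>)\<^sup>2)"
          using assms by (simp add: interval_integral_inverse_phi_sq)
      qed simp
      fix y assume "min x 1 \<le> y" "y \<le> max x 1"
      with dom have "y < 1 + c / m"
        by auto
      then have "(G has_real_derivative (LBINT \<tau>=ereal 0..ereal y. 1 / (phi m c \<tau>)\<^sup>2)) (at y)"
        unfolding interval_integral_inverse_phi_sq[OF \<open>m > 0\<close> \<open>c > 0\<close> \<open>y < 1 + c / m\<close>]
        by (rule G_deriv)
      then show "(G has_vector_derivative (LBINT \<tau>=ereal 0..ereal y. 1 / (phi m c \<tau>)\<^sup>2))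
          (at y within {min x 1..max x 1})"
        unfolding has_real_derivative_iff_has_vector_derivative by (rule has_vector_derivative_at_within)
    qed
    then show ?thesis
      unfolding eta_def by simp
  qed
  have "((\<lambda>x. xi \<beta> 1 - (G 1 - G x)) has_real_derivative
      0 - (0 - (1 / (m * phi m c t) - 1 / (m * (m + c))))) (at t)"
    by (intro DERIV_diff DERIV_const G_deriv \<open>t < 1 + c / m\<close>)
  then have "((\<lambda>x. xi \<beta> 1 - (G 1 - G x)) has_real_derivative
      1 / (m * phi m c t) - 1 / (m * (m + c))) (at t)"
    by simp
  then show ?thesis
    by (rule has_field_derivative_transform_within_open[of _ _ _ "{..<1 + c / m}"])
      (use assms eta_eq in auto)
qed

lemma deriv2_eta:
  assumes "m > 0" "c > 0" "t < 1 + c / m"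
  shows "deriv (deriv (eta \<beta> m c)) t = 1 / (phi m c t)\<^sup>2"
proof -
  have deriv_eq: "1 / (m * phi m c x) - 1 / (m * (m + c)) = deriv (eta \<beta> m c) x"
    if "x < 1 + c / m" for x
    using has_real_derivative_eta[OF \<open>m > 0\<close> \<open>c > 0\<close> that] by (rule DERIV_imp_deriv[symmetric])
  have "((\<lambda>x. 1 / (m * phi m c x) - 1 / (m * (m + c))) has_real_derivative
      1 / (phi m c t)\<^sup>2 - 0) (at t)"
    using assms by (intro DERIV_diff DERIV_const has_real_derivative_inverse_phi)
  then have "((\<lambda>x. 1 / (m * phi m c x) - 1 / (m * (m + c))) has_real_derivative
      1 / (phi m c t)\<^sup>2) (at t)"
    by simp
  then have "(deriv (eta \<beta> m c) has_real_derivative 1 / (phi m c t)\<^sup>2) (at t)"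
    by (rule has_field_derivative_transform_within_open[of _ _ _ "{..<1 + c / m}"])
      (use assms deriv_eq in auto)
  then show ?thesis
    by (rule DERIV_imp_deriv)
qed

theorem lemma5p4:
  fixes \<beta> :: "nat \<Rightarrow> real" and m c :: real
  assumes "is_model \<beta>"
    and "xi \<beta> 1 = 1"
    and "\<not> (\<exists>a. \<forall>t\<in>{-1..1}. xi \<beta> t = a * t\<^sup>2)"
    and "m > 0" and "c > 0"
    and "xi \<beta> 1 = (1 / m) * ((1 / m) * ln ((c + m) / c) - 1 / (c + m))"
    and "1 / deriv (xi \<beta>) 1 = c * (c + m)"
  shows "deriv (deriv (eta \<beta> m c)) 1 \<ge> deriv (deriv (xi \<beta>)) 1
         \<longleftrightarrow> (pure_like \<beta> \<or> critical \<beta>)"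
proof -
  define k where "k = c * (c + m)"
  have "k > 0" "(c + m) / c > 1"
    using \<open>m > 0\<close> \<open>c > 0\<close> by (simp_all add: k_def)
  have "nu2 \<beta> > 0"
    using nu2_pos[OF \<open>is_model \<beta>\<close>] .
  have "nu1 \<beta> = 1 / k"
    using assms(7)[symmetric] unfolding nu1_def k_def by simp
  then have ABA_eq: "ABA \<beta> = aba_fun k (nu2 \<beta> * k)"
    using \<open>k > 0\<close> \<open>nu2 \<beta> > 0\<close> ABA_eq_aba_fun[of \<beta>] by simp
  have root: "aba_fun k ((c + m) / c) = 0"
    unfolding k_def using assms(2,4-6) by (intro aba_fun_root_from_parameters) auto
  have eta2: "deriv (deriv (eta \<beta> m c)) 1 = 1 / c\<^sup>2"
    using deriv2_eta[OF \<open>m > 0\<close> \<open>c > 0\<close>, of 1 \<beta>] \<open>m > 0\<close> \<open>c > 0\<close> by (simp add: phi_def)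
  have "deriv (deriv (eta \<beta> m c)) 1 \<ge> nu2 \<beta> \<longleftrightarrow> nu2 \<beta> * c\<^sup>2 \<le> 1"
    unfolding eta2 using \<open>c > 0\<close> by (simp add: pos_le_divide_eq)
  also have "\<dots> \<longleftrightarrow> (c + m) / c * (nu2 \<beta> * c\<^sup>2) \<le> (c + m) / c * 1"
    using \<open>(c + m) / c > 1\<close> by (intro mult_le_cancel_left_pos[symmetric]) simp
  also have "\<dots> \<longleftrightarrow> nu2 \<beta> * k \<le> (c + m) / c"
    using \<open>c > 0\<close> by (simp add: k_def power2_eq_square mult_ac)
  also have "\<dots> \<longleftrightarrow> aba_fun k (nu2 \<beta> * k) \<ge> 0"
    using \<open>nu2 \<beta> > 0\<close> \<open>k > 0\<close>
    by (intro aba_fun_nonneg_iff[symmetric] \<open>k > 0\<close> \<open>(c + m) / c > 1\<close> root) simp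
  also have "\<dots> \<longleftrightarrow> ABA \<beta> \<ge> 0"
    unfolding ABA_eq ..
  finally show ?thesis
    unfolding pure_like_def critical_def nu2_def[symmetric] by auto
qed

end
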